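(* Let $\Phi=(A;\{E_i\}_{i=0}^d;A^*;\{E^*_i\}_{i=0}^d)$ be a tridiagonal system on $V$ with $d\ge1$, such that $(A,A^* )$ satisfies the $q$-Serre relations, with $E_iV$ the eigenspace of $A$ for $\theta_i=q^{2i-d}$ and $E^*_iV$ the eigenspace of $A^*$ for $\theta^*_i=q^{d-2i}$. Let $\{U_i\}_{i=0}^d$ be its split decomposition, $K:V\to V$ the linear map acting on $U_i$ as $q^{d-2i}I$, $t$ a scalar, $B=A$ and $B^*=tA^*+(1-t)K$. Then $B$ and $B^*$ satisfy the $q$-Serre relations: $$B^3B^*-[3]_qB^2B^*B+[3]_qBB^*B^2-B^*B^3=0,\qquad B^{*3}B-[3]_qB^{*2}BB^*+[3]_qB^*BB^{*2}-BB^{*3}=0.$$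
   Context: $\mathcal K$ is an algebraically closed field; $V$ is a nonzero finite-dimensional vector space over $\mathcal K$; $q\in\mathcal K$ is nonzero and not a root of unity; $[3]_q=\frac{q^3-q^{-3}}{q-q^{-1}}=q^2+1+q^{-2}$. The $q$-Serre relations for $(X,Y)$: $X^3Y-[3]_qX^2YX+[3]_qXYX^2-YX^3=0$ and $Y^3X-[3]_qY^2XY+[3]_qYXY^2-XY^3=0$. Primitive idempotent of a diagonalizable $X$ for eigenvalue $\lambda_i$: $\prod_{j\ne i}\frac{X-\lambda_jI}{\lambda_i-\lambda_j}$. A tridiagonal system on $V$ is a sequence $(A;\{E_i\}_{i=0}^d;A^*;\{E^*_i\}_{i=0}^d)$ with $A,A^*$ diagonalizable, $\{E_i\}$, $\{E^*_i\}$ orderings of their primitive idempotents, $E_iA^*E_j=0$ and $E^*_iAE^*_j=0$ when $|i-j|>1$, and no subspaces other than $0,V$ invariant under both $A$ and $A^*$. Split decomposition: $U_i=(E^*_0V+\cdots+E^*_iV)\cap(E_iV+\cdots+E_dV)$; known: $V=U_0\oplus\cdots\oplus U_d$, $(A-\theta_iI)U_i\subseteq U_{i+1}$, $(A^*-\theta^*_iI)U_i\subseteq U_{i-1}$ ($U_{-1}=U_{d+1}=0$). *)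

theory Defs
  imports "Jordan_Normal_Form.Jordan_Normal_Form"
begin

definition alg_closed :: "'a::field itself \<Rightarrow> bool" where
  "alg_closed _ \<longleftrightarrow> (\<forall>p :: 'a poly. degree p > 0 \<longrightarrow> (\<exists>x. poly p x = 0))"

definition not_root_of_unity :: "'a::field \<Rightarrow> bool" where
  "not_root_of_unity q \<longleftrightarrow> (\<forall>m::nat. m > 0 \<longrightarrow> q ^ m \<noteq> 1)"

definition qint3 :: "'a::field \<Rightarrow> 'a" where
  "qint3 q = q ^ 2 + 1 + inverse (q ^ 2)"

definition q_serre :: "nat \<Rightarrow> 'a::field \<Rightarrow> 'a mat \<Rightarrow> 'a mat \<Rightarrow> bool" where
  "q_serre n q X Y \<longleftrightarrow>
     X * X * X * Y - qint3 q \<cdot>\<^sub>m (X * X * Y * X) + qint3 q \<cdot>\<^sub>m (X * Y * X * X) - Y * X * X * X = 0\<^sub>m n n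
   \<and> Y * Y * Y * X - qint3 q \<cdot>\<^sub>m (Y * Y * X * Y) + qint3 q \<cdot>\<^sub>m (Y * X * Y * Y) - X * Y * Y * Y = 0\<^sub>m n n"

definition diagonalizable :: "'a::field mat \<Rightarrow> bool" where
  "diagonalizable X \<longleftrightarrow> (\<exists>D. similar_mat X D \<and> diagonal_mat D)"

definition prim_idem :: "nat \<Rightarrow> 'a::field mat \<Rightarrow> (nat \<Rightarrow> 'a) \<Rightarrow> nat \<Rightarrow> nat \<Rightarrow> 'a mat" where
  "prim_idem n X th d i =
     foldr (\<lambda>j M. (inverse (th i - th j) \<cdot>\<^sub>m (X - th j \<cdot>\<^sub>m 1\<^sub>m n)) * M)
           (filter (\<lambda>j. j \<noteq> i) [0..<Suc d]) (1\<^sub>m n)"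

definition is_prim_idem_ordering :: "nat \<Rightarrow> 'a::field mat \<Rightarrow> (nat \<Rightarrow> 'a mat) \<Rightarrow> nat \<Rightarrow> bool" where
  "is_prim_idem_ordering n X E d \<longleftrightarrow>
     (\<exists>th. inj_on th {0..d} \<and> {k. eigenvalue X k} = th ` {0..d}
        \<and> (\<forall>i\<le>d. E i = prim_idem n X th d i))"

definition subspace_of :: "nat \<Rightarrow> 'a::field vec set \<Rightarrow> bool" where
  "subspace_of n W \<longleftrightarrow> W \<subseteq> carrier_vec n \<and> 0\<^sub>v n \<in> W
     \<and> (\<forall>v\<in>W. \<forall>w\<in>W. v + w \<in> W) \<and> (\<forall>c. \<forall>v\<in>W. c \<cdot>\<^sub>v v \<in> W)"

definition invariant_under :: "'a::field mat \<Rightarrow> 'a vec set \<Rightarrow> bool" where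
  "invariant_under X W \<longleftrightarrow> (\<forall>w\<in>W. X *\<^sub>v w \<in> W)"

definition img :: "nat \<Rightarrow> 'a::field mat \<Rightarrow> 'a vec set" where
  "img n M = {M *\<^sub>v v | v. v \<in> carrier_vec n}"

definition eigenspace :: "nat \<Rightarrow> 'a::field mat \<Rightarrow> 'a \<Rightarrow> 'a vec set" where
  "eigenspace n X k = {v \<in> carrier_vec n. X *\<^sub>v v = k \<cdot>\<^sub>v v}"

definition subsp_sum :: "nat \<Rightarrow> (nat \<Rightarrow> 'a::field vec set) \<Rightarrow> nat set \<Rightarrow> 'a vec set" where
  "subsp_sum n W S = {finsum_vec TYPE('a) n f S | f. \<forall>j\<in>S. f j \<in> W j}"

definition tridiagonal_system ::
  "nat \<Rightarrow> 'a::field mat \<Rightarrow> (nat \<Rightarrow> 'a mat) \<Rightarrow> 'a mat \<Rightarrow> (nat \<Rightarrow> 'a mat) \<Rightarrow> nat \<Rightarrow> bool" where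
  "tridiagonal_system n A E As Es d \<longleftrightarrow>
     A \<in> carrier_mat n n \<and> As \<in> carrier_mat n n
   \<and> diagonalizable A \<and> diagonalizable As
   \<and> is_prim_idem_ordering n A E d \<and> is_prim_idem_ordering n As Es d
   \<and> (\<forall>i\<le>d. \<forall>j\<le>d. (i > Suc j \<or> j > Suc i) \<longrightarrow> E i * As * E j = 0\<^sub>m n n)
   \<and> (\<forall>i\<le>d. \<forall>j\<le>d. (i > Suc j \<or> j > Suc i) \<longrightarrow> Es i * A * Es j = 0\<^sub>m n n)
   \<and> (\<forall>W. subspace_of n W \<and> invariant_under A W \<and> invariant_under As W
          \<longrightarrow> W = {0\<^sub>v n} \<or> W = carrier_vec n)"

definition split_decomp ::
  "nat \<Rightarrow> (nat \<Rightarrow> 'a::field mat) \<Rightarrow> (nat \<Rightarrow> 'a mat) \<Rightarrow> nat \<Rightarrow> nat \<Rightarrow> 'a vec set" where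
  "split_decomp n E Es d i =
     subsp_sum n (\<lambda>j. img n (Es j)) {0..i} \<inter> subsp_sum n (\<lambda>j. img n (E j)) {i..d}"

end

theory Submission
  imports Defs
begin

text \<open>
  Write \<open>L = A\<^sup>* - K\<close>, so that \<open>B\<^sup>* = K + t L\<close> and \<open>A\<^sup>* = K + L\<close>.  On the split
  decomposition \<open>A - \<theta>\<^sub>i\<close> maps \<open>U\<^sub>i\<close> into \<open>U\<^sub>i\<^sub>+\<^sub>1\<close> and \<open>A\<^sup>* - \<theta>\<^sup>*\<^sub>i\<close> maps \<open>U\<^sub>i\<close>
  into \<open>U\<^sub>i\<^sub>-\<^sub>1\<close>, while \<open>K\<close> acts on \<open>U\<^sub>i\<close> as \<open>\<theta>\<^sup>*\<^sub>i = q\<^sup>d\<^sup>-\<^sup>2\<^sup>i\<close>; the sum of the \<open>U\<^sub>i\<close>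
  is invariant under \<open>A\<close> and \<open>A\<^sup>*\<close> and contains \<open>E\<^sup>*\<^sub>0V \<noteq> 0\<close>, hence is \<open>V\<close>.  This gives
  the relations \<open>KL = q\<^sup>2LK\<close> and \<open>q\<^sup>2KA - AK = (q\<^sup>2 - 1)I\<close>, and shows that \<open>K\<close> is invertible.

  The first q-Serre relation is linear in \<open>B\<^sup>*\<close>; it holds for \<open>B\<^sup>* = K\<close> by the second
  commutation relation and for \<open>B\<^sup>* = A\<^sup>*\<close> by hypothesis, hence for every \<open>t\<close>.  The second
  one is cubic in \<open>t\<close>: its constant term is the relation for \<open>(A, K)\<close>, which holds, and
  the coefficients \<open>P\<^sub>1, P\<^sub>2, P\<^sub>3\<close> of \<open>t, t\<^sup>2, t\<^sup>3\<close> satisfy \<open>KP\<^sub>j = q\<^sup>2\<^sup>j\<^sup>-\<^sup>2P\<^sub>jK\<close>.  From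
  \<open>P\<^sub>1 + P\<^sub>2 + P\<^sub>3 = 0\<close> (the case \<open>t = 1\<close>), conjugated by \<open>K\<close> and \<open>K\<^sup>2\<close>, a Vandermonde
  argument with \<open>q\<^sup>4 \<noteq> 1\<close> gives \<open>P\<^sub>1 = P\<^sub>2 = P\<^sub>3 = 0\<close>.
\<close>

lemma smult_vec_zero[simp]: "c \<cdot>\<^sub>v 0\<^sub>v n = (0\<^sub>v n :: 'a::mult_zero vec)"
  by (intro eq_vecI) auto

lemma mult_mat_vec_zero:
  "M \<in> carrier_mat nr nc \<Longrightarrow> M *\<^sub>v 0\<^sub>v nc = (0\<^sub>v nr :: 'a::semiring_0 vec)"
  by (intro eq_vecI) (auto simp: scalar_prod_def)

lemma smult_mat_mult_vec:
  assumes "M \<in> carrier_mat nr nc" and "v \<in> carrier_vec nc"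
  shows "(c \<cdot>\<^sub>m M) *\<^sub>v v = c \<cdot>\<^sub>v (M *\<^sub>v v :: 'a::comm_ring_1 vec)"
  using assms by (intro eq_vecI) (auto simp: scalar_prod_def sum_distrib_left ac_simps)

lemma eq_mat_on_vecI:
  assumes A: "A \<in> carrier_mat nr nc" and B: "B \<in> carrier_mat nr nc"
    and eq: "\<And>v. v \<in> carrier_vec nc \<Longrightarrow> A *\<^sub>v v = B *\<^sub>v (v :: 'a::semiring_1 vec)"
  shows "A = B"
proof (rule eq_matI)
  fix i j assume i: "i < dim_row B" and j: "j < dim_col B"
  have "(A *\<^sub>v unit_vec nc j) $ i = (B *\<^sub>v unit_vec nc j) $ i" by (simp add: eq)
  then show "A $$ (i, j) = B $$ (i, j)" using A B i j by simp
qed (use A B in auto)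

lemma finsum_vec_eq_vec:
  assumes "finite S" and "\<And>j. j \<in> S \<Longrightarrow> f j \<in> carrier_vec n"
  shows "finsum_vec TYPE('a::comm_monoid_add) n f S = vec n (\<lambda>i. \<Sum>j\<in>S. f j $ i)"
  using assms finsum_vec_closed[of f S n] by (intro eq_vecI) (auto simp: index_finsum_vec)

lemma finsum_vec_add:
  assumes "finite S" and "\<And>j. j \<in> S \<Longrightarrow> f j \<in> carrier_vec n" and "\<And>j. j \<in> S \<Longrightarrow> g j \<in> carrier_vec n"
  shows "finsum_vec TYPE('a::comm_monoid_add) n (\<lambda>j. f j + g j) S
    = finsum_vec TYPE('a) n f S + finsum_vec TYPE('a) n g S"
proof -
  have dim: "dim_vec (f j) = n" "dim_vec (g j) = n" if "j \<in> S" for j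
    using assms(2,3)[OF that] by auto
  show ?thesis
    using assms by (auto simp: finsum_vec_eq_vec dim sum.distrib[symmetric] intro!: eq_vecI sum.cong)
qed

lemma finsum_vec_smult:
  assumes "finite S" and "\<And>j. j \<in> S \<Longrightarrow> f j \<in> carrier_vec n"
  shows "finsum_vec TYPE('a::comm_ring_1) n (\<lambda>j. c \<cdot>\<^sub>v f j) S = c \<cdot>\<^sub>v finsum_vec TYPE('a) n f S"
proof -
  have dim: "dim_vec (f j) = n" if "j \<in> S" for j
    using assms(2)[OF that] by auto
  show ?thesis
    using assms by (auto simp: finsum_vec_eq_vec dim sum_distrib_left intro!: eq_vecI sum.cong)
qed

lemma finsum_vec_delta:
  assumes "finite S" and "j \<in> S" and "w \<in> carrier_vec n"
  shows "finsum_vec TYPE('a::comm_monoid_add) n (\<lambda>k. if k = j then w else 0\<^sub>v n) S = w"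
proof -
  have "(\<Sum>k\<in>S. (if k = j then w else 0\<^sub>v n) $ i) = w $ i" if "i < n" for i
    using assms that by (simp add: if_distrib[of "\<lambda>v. v $ i"] cong: if_cong)
  then show ?thesis
    using assms by (auto simp: finsum_vec_eq_vec intro!: eq_vecI)
qed

lemma finsum_vec_zero: "finite S \<Longrightarrow> finsum_vec TYPE('a::comm_monoid_add) n (\<lambda>_. 0\<^sub>v n) S = 0\<^sub>v n"
  by (simp add: finsum_vec_eq_vec) (intro eq_vecI, auto)

lemma finsum_vec_cong:
  assumes "finite S" and "\<And>j. j \<in> S \<Longrightarrow> f j = g j" and "\<And>j. j \<in> S \<Longrightarrow> f j \<in> carrier_vec n"
  shows "finsum_vec TYPE('a::comm_monoid_add) n f S = finsum_vec TYPE('a) n g S"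
  using assms by (simp add: finsum_vec_eq_vec)

lemma finsum_vec_mono_neutral:
  assumes "finite S" and "R \<subseteq> S" and "\<And>j. j \<in> S - R \<Longrightarrow> f j = 0\<^sub>v n"
    and "\<And>j. j \<in> S \<Longrightarrow> f j \<in> carrier_vec n"
  shows "finsum_vec TYPE('a::comm_monoid_add) n f S = finsum_vec TYPE('a) n f R"
proof -
  have R: "finite R"
    using assms(1,2) finite_subset by blast
  have "finsum_vec TYPE('a) n f S = vec n (\<lambda>i. \<Sum>j\<in>S. f j $ i)"
    using assms by (intro finsum_vec_eq_vec) auto
  moreover have "finsum_vec TYPE('a) n f R = vec n (\<lambda>i. \<Sum>j\<in>R. f j $ i)"
    using assms R by (intro finsum_vec_eq_vec) auto
  moreover have "(\<Sum>j\<in>S. f j $ i) = (\<Sum>j\<in>R. f j $ i)" if "i < n" for i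
    using assms that by (intro sum.mono_neutral_right) auto
  ultimately show ?thesis
    by (auto intro!: eq_vecI)
qed

section \<open>The q-Serre relations in the presence of a q-grading\<close>

definition serre_form :: "'a::field \<Rightarrow> 'a mat \<Rightarrow> 'a mat \<Rightarrow> 'a mat \<Rightarrow> 'a mat \<Rightarrow> 'a vec \<Rightarrow> 'a vec" where
  "serre_form q X Y1 Y2 Y3 v =
     Y1 *\<^sub>v (Y2 *\<^sub>v (Y3 *\<^sub>v (X *\<^sub>v v))) - qint3 q \<cdot>\<^sub>v (Y1 *\<^sub>v (Y2 *\<^sub>v (X *\<^sub>v (Y3 *\<^sub>v v))))
     + qint3 q \<cdot>\<^sub>v (Y1 *\<^sub>v (X *\<^sub>v (Y2 *\<^sub>v (Y3 *\<^sub>v v)))) - X *\<^sub>v (Y1 *\<^sub>v (Y2 *\<^sub>v (Y3 *\<^sub>v v)))"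

lemma serre_form_carrier[simp]:
  "X \<in> carrier_mat n n \<Longrightarrow> Y1 \<in> carrier_mat n n \<Longrightarrow> Y2 \<in> carrier_mat n n \<Longrightarrow> Y3 \<in> carrier_mat n n
    \<Longrightarrow> v \<in> carrier_vec n \<Longrightarrow> serre_form q X Y1 Y2 Y3 v \<in> carrier_vec n"
  by (simp add: serre_form_def mult_mat_vec_carrier[of _ n n])

lemma mult_mat_vec_serre_poly:
  assumes "X \<in> carrier_mat n n" "Y1 \<in> carrier_mat n n" "Y2 \<in> carrier_mat n n" "Y3 \<in> carrier_mat n n"
    and "v \<in> carrier_vec n"
  shows "(Y1 * Y2 * Y3 * X - qint3 q \<cdot>\<^sub>m (Y1 * Y2 * X * Y3) + qint3 q \<cdot>\<^sub>m (Y1 * X * Y2 * Y3)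
      - X * Y1 * Y2 * Y3) *\<^sub>v v = serre_form q X Y1 Y2 Y3 v"
  using assms by (simp add: serre_form_def add_mult_distrib_mat_vec[of _ n n] minus_mult_distrib_mat_vec[of _ n n]
      smult_mat_mult_vec[of _ n n] mult_carrier_mat[of _ n n _ n] minus_carrier_mat assoc_mult_mat_vec[of _ n n _ n]
      del: assoc_mult_mat)

lemma q_serre_iff_serre_form:
  assumes X: "X \<in> carrier_mat n n" and Y: "Y \<in> carrier_mat n n"
  shows "q_serre n q X Y \<longleftrightarrow>
    (\<forall>v\<in>carrier_vec n. serre_form q Y X X X v = 0\<^sub>v n \<and> serre_form q X Y Y Y v = 0\<^sub>v n)"
proof -
  have zero_iff: "M = 0\<^sub>m n n \<longleftrightarrow> (\<forall>v\<in>carrier_vec n. M *\<^sub>v v = 0\<^sub>v n)" if M: "M \<in> carrier_mat n n" for M :: "'a mat"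
  proof
    show "\<forall>v\<in>carrier_vec n. M *\<^sub>v v = 0\<^sub>v n" if "M = 0\<^sub>m n n"
      using that by (auto intro!: eq_vecI)
    show "M = 0\<^sub>m n n" if "\<forall>v\<in>carrier_vec n. M *\<^sub>v v = 0\<^sub>v n"
      using that by (intro eq_mat_on_vecI[OF M]) (auto intro!: eq_vecI)
  qed
  have carrier: "Y1 * Y2 * Y3 * X' - c \<cdot>\<^sub>m (Y1 * Y2 * X' * Y3) + c \<cdot>\<^sub>m (Y1 * X' * Y2 * Y3)
      - X' * Y1 * Y2 * Y3 \<in> carrier_mat n n"
    if "X' \<in> carrier_mat n n" "Y1 \<in> carrier_mat n n" "Y2 \<in> carrier_mat n n" "Y3 \<in> carrier_mat n n"
    for X' Y1 Y2 Y3 :: "'a mat" and c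
    using that by (simp add: minus_carrier_mat mult_carrier_mat[of _ n n _ n])
  show ?thesis
    unfolding q_serre_def zero_iff[OF carrier[OF Y X X X]] zero_iff[OF carrier[OF X Y Y Y]]
    using X Y by (simp add: mult_mat_vec_serre_poly ball_conj_distrib del: assoc_mult_mat)
qed

lemma vandermonde3_trivial:
  fixes r x y z :: "'a::field"
  assumes "x + y + z = 0" "x + r * y + r^2 * z = 0" "x + r^2 * y + r^4 * z = 0"
    and "r \<noteq> 0" "r^2 \<noteq> 1"
  shows "x = 0 \<and> y = 0 \<and> z = 0"
proof -
  have "(r - 1) * (r + 1) \<noteq> 0"
    using assms(5) by (simp add: algebra_simps power2_eq_square)
  then have det: "r * (r - 1)^2 * (r + 1) \<noteq> 0"
    using assms(4) by simp
  have "z * (r * (r - 1)^2 * (r + 1)) = 0" "y * (r * (r - 1)^2 * (r + 1)) = 0"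
    using assms(1-3) by Groebner_Basis.algebra+
  with det assms(1) show ?thesis by auto
qed

locale q_grading =
  fixes n :: nat and q :: "'a::field" and A K L :: "'a mat"
  assumes A_carrier[simp]: "A \<in> carrier_mat n n" and K_carrier[simp]: "K \<in> carrier_mat n n"
    and L_carrier[simp]: "L \<in> carrier_mat n n"
    and q_nonzero: "q \<noteq> 0"
    and K_L: "K * L = q^2 \<cdot>\<^sub>m (L * K)"
    and K_A: "q^2 \<cdot>\<^sub>m (K * A) = A * K + (q^2 - 1) \<cdot>\<^sub>m 1\<^sub>m n"
begin

lemmas mult_mat_vec_simps[simp] =
  mult_mat_vec_carrier[OF A_carrier] mult_mat_vec_carrier[OF K_carrier] mult_mat_vec_carrier[OF L_carrier]
  mult_add_distrib_mat_vec[OF A_carrier] mult_add_distrib_mat_vec[OF K_carrier] mult_add_distrib_mat_vec[OF L_carrier]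
  mult_minus_distrib_mat_vec[OF A_carrier] mult_minus_distrib_mat_vec[OF K_carrier] mult_minus_distrib_mat_vec[OF L_carrier]
  mult_mat_vec[OF A_carrier] mult_mat_vec[OF K_carrier] mult_mat_vec[OF L_carrier]
  mult_mat_vec_zero[OF A_carrier] mult_mat_vec_zero[OF K_carrier] mult_mat_vec_zero[OF L_carrier]

lemma dim_row_simps[simp]: "dim_row A = n" "dim_row K = n" "dim_row L = n"
  using carrier_matD(1) A_carrier K_carrier L_carrier by blast+

lemma K_L_mult_vec[simp]: "x \<in> carrier_vec n \<Longrightarrow> K *\<^sub>v (L *\<^sub>v x) = q^2 \<cdot>\<^sub>v (L *\<^sub>v (K *\<^sub>v x))"
  using arg_cong[OF K_L, of "\<lambda>M. M *\<^sub>v x"] A_carrier K_carrier L_carrier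
  by (simp add: smult_mat_mult_vec[of _ n n])

lemma K_A_mult_vec[simp]:
  assumes x: "x \<in> carrier_vec n"
  shows "K *\<^sub>v (A *\<^sub>v x) = inverse (q^2) \<cdot>\<^sub>v (A *\<^sub>v (K *\<^sub>v x)) + (1 - inverse (q^2)) \<cdot>\<^sub>v x"
proof -
  have "q^2 \<cdot>\<^sub>v (K *\<^sub>v (A *\<^sub>v x)) = A *\<^sub>v (K *\<^sub>v x) + (q^2 - 1) \<cdot>\<^sub>v x"
    using arg_cong[OF K_A, of "\<lambda>M. M *\<^sub>v x"] x A_carrier K_carrier
    by (simp add: smult_mat_mult_vec[of _ n n] add_mult_distrib_mat_vec[of _ n n])
  then have h: "q^2 * (K *\<^sub>v (A *\<^sub>v x)) $ i = (A *\<^sub>v (K *\<^sub>v x)) $ i + (q^2 - 1) * x $ i"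
    if "i < n" for i
    using that x by (auto dest!: arg_cong[where f = "\<lambda>v. v $ i"])
  show ?thesis
  proof (rule eq_vecI)
    fix i assume "i < dim_vec (inverse (q^2) \<cdot>\<^sub>v (A *\<^sub>v (K *\<^sub>v x)) + (1 - inverse (q^2)) \<cdot>\<^sub>v x)"
    then have i: "i < n" using x by simp
    show "(K *\<^sub>v (A *\<^sub>v x)) $ i = (inverse (q^2) \<cdot>\<^sub>v (A *\<^sub>v (K *\<^sub>v x)) + (1 - inverse (q^2)) \<cdot>\<^sub>v x) $ i"
      using h[OF i] i x q_nonzero by (simp add: field_simps)
  qed (use x in simp)
qed

lemma K_plus_smult_L_mult_vec[simp]:
  "x \<in> carrier_vec n \<Longrightarrow> (K + t \<cdot>\<^sub>m L) *\<^sub>v x = K *\<^sub>v x + t \<cdot>\<^sub>v (L *\<^sub>v x)"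
  by (simp add: add_mult_distrib_mat_vec[of _ n n] smult_mat_mult_vec[of _ n n])

lemma serre_form_K_A:
  assumes v: "v \<in> carrier_vec n"
  shows "serre_form q K A A A v = 0\<^sub>v n"
proof (rule eq_vecI)
  fix i assume "i < dim_vec (0\<^sub>v n :: 'a vec)"
  with v show "serre_form q K A A A v $ i = 0\<^sub>v n $ i"
    by (simp add: serre_form_def qint3_def field_simps q_nonzero del: index_mult_mat_vec) Groebner_Basis.algebra
qed (simp add: serre_form_def v)

lemma serre_form_A_K:
  assumes v: "v \<in> carrier_vec n"
  shows "serre_form q A K K K v = 0\<^sub>v n"
proof (rule eq_vecI)
  fix i assume "i < dim_vec (0\<^sub>v n :: 'a vec)"
  with v show "serre_form q A K K K v $ i = 0\<^sub>v n $ i"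
    by (simp add: serre_form_def qint3_def field_simps q_nonzero del: index_mult_mat_vec)
      Groebner_Basis.algebra
qed (simp add: serre_form_def v)

definition serre_L1 :: "'a vec \<Rightarrow> 'a vec" where
  "serre_L1 v = serre_form q A L K K v + serre_form q A K L K v + serre_form q A K K L v"

definition serre_L2 :: "'a vec \<Rightarrow> 'a vec" where
  "serre_L2 v = serre_form q A L L K v + serre_form q A L K L v + serre_form q A K L L v"

definition serre_L3 :: "'a vec \<Rightarrow> 'a vec" where
  "serre_L3 v = serre_form q A L L L v"

lemma serre_L_carrier[simp]:
  "v \<in> carrier_vec n \<Longrightarrow> serre_L1 v \<in> carrier_vec n"
  "v \<in> carrier_vec n \<Longrightarrow> serre_L2 v \<in> carrier_vec n"
  "v \<in> carrier_vec n \<Longrightarrow> serre_L3 v \<in> carrier_vec n"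
  "v \<in> carrier_vec n \<Longrightarrow> dim_vec (serre_L1 v) = n"
  "v \<in> carrier_vec n \<Longrightarrow> dim_vec (serre_L2 v) = n"
  "v \<in> carrier_vec n \<Longrightarrow> dim_vec (serre_L3 v) = n"
  by (simp_all add: serre_L1_def serre_L2_def serre_L3_def)

lemma K_serre_L1:
  assumes v: "v \<in> carrier_vec n"
  shows "K *\<^sub>v serre_L1 v = serre_L1 (K *\<^sub>v v)"
proof (rule eq_vecI)
  fix i assume "i < dim_vec (serre_L1 (K *\<^sub>v v))"
  with v show "(K *\<^sub>v serre_L1 v) $ i = serre_L1 (K *\<^sub>v v) $ i"
    by (simp add: serre_L1_def serre_form_def qint3_def field_simps q_nonzero del: index_mult_mat_vec)
      Groebner_Basis.algebra
qed (simp add: v)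

lemma K_serre_L2:
  assumes v: "v \<in> carrier_vec n"
  shows "K *\<^sub>v serre_L2 v = q^2 \<cdot>\<^sub>v serre_L2 (K *\<^sub>v v)"
proof (rule eq_vecI)
  fix i assume "i < dim_vec (q^2 \<cdot>\<^sub>v serre_L2 (K *\<^sub>v v))"
  with v show "(K *\<^sub>v serre_L2 v) $ i = (q^2 \<cdot>\<^sub>v serre_L2 (K *\<^sub>v v)) $ i"
    by (simp add: serre_L2_def serre_form_def qint3_def field_simps q_nonzero del: index_mult_mat_vec)
      Groebner_Basis.algebra
qed (simp add: v)

lemma K_serre_L3:
  assumes v: "v \<in> carrier_vec n"
  shows "K *\<^sub>v serre_L3 v = q^4 \<cdot>\<^sub>v serre_L3 (K *\<^sub>v v)"
proof (rule eq_vecI)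
  fix i assume "i < dim_vec (q^4 \<cdot>\<^sub>v serre_L3 (K *\<^sub>v v))"
  with v show "(K *\<^sub>v serre_L3 v) $ i = (q^4 \<cdot>\<^sub>v serre_L3 (K *\<^sub>v v)) $ i"
    by (simp add: serre_L3_def serre_form_def qint3_def field_simps q_nonzero del: index_mult_mat_vec)
qed (simp add: v)

lemma serre_form_K_plus_smult_L_A:
  assumes v: "v \<in> carrier_vec n"
  shows "serre_form q (K + t \<cdot>\<^sub>m L) A A A v = serre_form q K A A A v + t \<cdot>\<^sub>v serre_form q L A A A v"
proof (rule eq_vecI)
  fix i assume "i < dim_vec (serre_form q K A A A v + t \<cdot>\<^sub>v serre_form q L A A A v)"
  with v show "serre_form q (K + t \<cdot>\<^sub>m L) A A A v $ i
      = (serre_form q K A A A v + t \<cdot>\<^sub>v serre_form q L A A A v) $ i"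
    by (simp add: serre_form_def del: index_mult_mat_vec K_L_mult_vec K_A_mult_vec) Groebner_Basis.algebra
qed (simp add: v serre_form_def)

lemma serre_form_A_K_plus_smult_L:
  assumes v: "v \<in> carrier_vec n"
  shows "serre_form q A (K + t \<cdot>\<^sub>m L) (K + t \<cdot>\<^sub>m L) (K + t \<cdot>\<^sub>m L) v
    = serre_form q A K K K v + t \<cdot>\<^sub>v serre_L1 v + t^2 \<cdot>\<^sub>v serre_L2 v + t^3 \<cdot>\<^sub>v serre_L3 v"
proof (rule eq_vecI)
  fix i assume "i < dim_vec (serre_form q A K K K v + t \<cdot>\<^sub>v serre_L1 v + t^2 \<cdot>\<^sub>v serre_L2 v + t^3 \<cdot>\<^sub>v serre_L3 v)"
  with v show "serre_form q A (K + t \<cdot>\<^sub>m L) (K + t \<cdot>\<^sub>m L) (K + t \<cdot>\<^sub>m L) v $ i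
      = (serre_form q A K K K v + t \<cdot>\<^sub>v serre_L1 v + t^2 \<cdot>\<^sub>v serre_L2 v + t^3 \<cdot>\<^sub>v serre_L3 v) $ i"
    by (simp add: serre_L1_def serre_L2_def serre_L3_def serre_form_def del: index_mult_mat_vec K_L_mult_vec K_A_mult_vec)
      Groebner_Basis.algebra
qed (simp add: v serre_form_def serre_L1_def serre_L2_def serre_L3_def)

lemma serre_L_vanish:
  assumes q4: "q^4 \<noteq> 1" and K_onto: "img n K = carrier_vec n"
    and sum: "\<And>v. v \<in> carrier_vec n \<Longrightarrow> serre_L1 v + serre_L2 v + serre_L3 v = 0\<^sub>v n"
    and w: "w \<in> carrier_vec n"
  shows "serre_L1 w = 0\<^sub>v n \<and> serre_L2 w = 0\<^sub>v n \<and> serre_L3 w = 0\<^sub>v n"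
proof -
  have "w \<in> img n K"
    using w K_onto by simp
  then obtain y where y: "y \<in> carrier_vec n" "K *\<^sub>v y = w"
    unfolding img_def by blast
  have "y \<in> img n K"
    using y(1) K_onto by simp
  then obtain x where x: "x \<in> carrier_vec n" "K *\<^sub>v x = y"
    unfolding img_def by blast
  have "K *\<^sub>v (serre_L1 y + serre_L2 y + serre_L3 y) = 0\<^sub>v n"
    using sum[OF y(1)] by simp
  then have eq1: "serre_L1 w + q^2 \<cdot>\<^sub>v serre_L2 w + q^4 \<cdot>\<^sub>v serre_L3 w = 0\<^sub>v n"
    using y by (simp add: K_serre_L1 K_serre_L2 K_serre_L3)
  have "K *\<^sub>v (K *\<^sub>v (serre_L1 x + serre_L2 x + serre_L3 x)) = 0\<^sub>v n"
    using sum[OF x(1)] by simp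
  then have eq2: "serre_L1 w + q^4 \<cdot>\<^sub>v serre_L2 w + q^8 \<cdot>\<^sub>v serre_L3 w = 0\<^sub>v n"
    using x y by (simp add: K_serre_L1 K_serre_L2 K_serre_L3 smult_smult_assoc flip: power_add)
  have "serre_L1 w $ i = 0 \<and> serre_L2 w $ i = 0 \<and> serre_L3 w $ i = 0" if i: "i < n" for i
  proof (rule vandermonde3_trivial)
    show "serre_L1 w $ i + serre_L2 w $ i + serre_L3 w $ i = 0"
      using arg_cong[OF sum[OF w], of "\<lambda>u. u $ i"] w i by simp
    show "serre_L1 w $ i + q^2 * serre_L2 w $ i + (q^2)^2 * serre_L3 w $ i = 0"
      using arg_cong[OF eq1, of "\<lambda>u. u $ i"] w i by (simp add: power_mult[symmetric])
    show "serre_L1 w $ i + (q^2)^2 * serre_L2 w $ i + (q^2)^4 * serre_L3 w $ i = 0"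
      using arg_cong[OF eq2, of "\<lambda>u. u $ i"] w i by (simp add: power_mult[symmetric])
    show "q^2 \<noteq> 0" "(q^2)^2 \<noteq> 1"
      using q_nonzero q4 by (simp_all add: power_mult[symmetric])
  qed
  then show ?thesis
    using w by (auto intro!: eq_vecI)
qed

theorem q_serre_K_plus_smult_L:
  assumes serre: "q_serre n q A (K + L)"
    and q4: "q^4 \<noteq> 1"
    and K_onto: "img n K = carrier_vec n"
  shows "q_serre n q A (K + t \<cdot>\<^sub>m L)"
proof -
  have B: "K + s \<cdot>\<^sub>m L \<in> carrier_mat n n" for s
    by simp
  have "K + L = K + 1 \<cdot>\<^sub>m L"
    using carrier_matD[OF K_carrier] carrier_matD[OF L_carrier] by (intro eq_matI) auto
  with serre have serre_1: "serre_form q (K + 1 \<cdot>\<^sub>m L) A A A v = 0\<^sub>v n"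
    "serre_form q A (K + 1 \<cdot>\<^sub>m L) (K + 1 \<cdot>\<^sub>m L) (K + 1 \<cdot>\<^sub>m L) v = 0\<^sub>v n" if "v \<in> carrier_vec n" for v
    using q_serre_iff_serre_form[OF A_carrier B] that by auto
  have L_A: "serre_form q L A A A v = 0\<^sub>v n" if v: "v \<in> carrier_vec n" for v
    using serre_1(1)[OF v] serre_form_K_plus_smult_L_A[OF v, of 1] serre_form_K_A[OF v] v by simp
  have sum: "serre_L1 v + serre_L2 v + serre_L3 v = 0\<^sub>v n" if v: "v \<in> carrier_vec n" for v
    using serre_1(2)[OF v] serre_form_A_K_plus_smult_L[OF v, of 1] serre_form_A_K[OF v] v by simp
  show ?thesis
    unfolding q_serre_iff_serre_form[OF A_carrier B]
    using serre_form_K_plus_smult_L_A serre_form_K_A L_A serre_form_A_K_plus_smult_L serre_form_A_K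
      serre_L_vanish[OF q4 K_onto sum]
    by simp
qed

end

section \<open>Subspaces and their sums\<close>

lemma subspace_of_carrier: "subspace_of n W \<Longrightarrow> W \<subseteq> carrier_vec n"
  unfolding subspace_of_def by auto

lemma subspace_of_zero: "subspace_of n W \<Longrightarrow> 0\<^sub>v n \<in> W"
  unfolding subspace_of_def by auto

lemma subspace_of_add: "subspace_of n W \<Longrightarrow> v \<in> W \<Longrightarrow> w \<in> W \<Longrightarrow> v + w \<in> W"
  unfolding subspace_of_def by auto

lemma subspace_of_smult: "subspace_of n W \<Longrightarrow> v \<in> W \<Longrightarrow> c \<cdot>\<^sub>v v \<in> W"
  unfolding subspace_of_def by auto

lemma subspace_of_diff:
  assumes W: "subspace_of n W" and v: "v \<in> W" and w: "w \<in> W"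
  shows "v - w \<in> (W :: 'a::field vec set)"
proof -
  have "v - w = v + (-1) \<cdot>\<^sub>v w"
    using v w subspace_of_carrier[OF W] by (intro eq_vecI) auto
  then show ?thesis
    using W v w by (simp add: subspace_of_add subspace_of_smult)
qed

lemma subspace_of_Int: "subspace_of n V \<Longrightarrow> subspace_of n W \<Longrightarrow> subspace_of n (V \<inter> W)"
  unfolding subspace_of_def by auto

lemma subspace_of_eigenspace: "X \<in> carrier_mat n n \<Longrightarrow> subspace_of n (eigenspace n X c)"
  unfolding subspace_of_def eigenspace_def
  by (auto intro!: eq_vecI simp: mult_add_distrib_mat_vec mult_mat_vec algebra_simps)

lemma subspace_of_img:
  assumes M: "M \<in> carrier_mat n n"
  shows "subspace_of n (img n (M :: 'a::field mat))"
  unfolding subspace_of_def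
proof (intro conjI ballI allI)
  show "img n M \<subseteq> carrier_vec n"
    using M unfolding img_def by auto
  show "0\<^sub>v n \<in> img n M"
    using mult_mat_vec_zero[OF M] unfolding img_def by (metis (mono_tags) mem_Collect_eq zero_carrier_vec)
  show "v + w \<in> img n M" if "v \<in> img n M" "w \<in> img n M" for v w
    using that M unfolding img_def by (force simp: mult_add_distrib_mat_vec[symmetric])
  show "c \<cdot>\<^sub>v v \<in> img n M" if "v \<in> img n M" for c v
    using that M unfolding img_def by (force simp: mult_mat_vec[symmetric])
qed

lemma subspace_of_mat_preimage:
  "M \<in> carrier_mat n n \<Longrightarrow> subspace_of n W \<Longrightarrow> subspace_of n {v \<in> carrier_vec n. M *\<^sub>v v \<in> (W :: 'a::field vec set)}"
  unfolding subspace_of_def by (auto simp: mult_add_distrib_mat_vec mult_mat_vec mult_mat_vec_zero)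

lemma subspace_of_mat_agree:
  assumes "M \<in> carrier_mat n n" and "N \<in> carrier_mat n n"
  shows "subspace_of n {v \<in> carrier_vec n. M *\<^sub>v v = N *\<^sub>v (v :: 'a::field vec)}"
  using assms unfolding subspace_of_def by (auto simp: mult_add_distrib_mat_vec mult_mat_vec mult_mat_vec_zero)

lemma finsum_vec_in_subspace:
  assumes W: "subspace_of n W" and "finite S" and "\<And>j. j \<in> S \<Longrightarrow> f j \<in> W"
  shows "finsum_vec TYPE('a::field) n f S \<in> W"
  using assms(2,3)
proof (induction S rule: finite_induct)
  case empty
  then show ?case using subspace_of_zero[OF W] by (simp add: finsum_vec_empty)
next
  case (insert j S)
  then have "f \<in> S \<rightarrow> carrier_vec n" "f j \<in> carrier_vec n"
    using subspace_of_carrier[OF W] by auto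
  with insert show ?case
    by (simp add: finsum_vec_insert subspace_of_add[OF W])
qed

lemma subspace_of_mat_finsum_fixed:
  assumes S: "finite S" and E: "\<And>k. k \<in> S \<Longrightarrow> E k \<in> carrier_mat n n"
  shows "subspace_of n {v \<in> carrier_vec n. finsum_vec TYPE('a::field) n (\<lambda>k. E k *\<^sub>v v) S = v}"
    (is "subspace_of n ?T")
  unfolding subspace_of_def
proof (intro conjI ballI allI)
  have E_mult: "E k *\<^sub>v x \<in> carrier_vec n" if "k \<in> S" "x \<in> carrier_vec n" for k x
    using E[OF that(1)] that(2) by simp
  have "finsum_vec TYPE('a) n (\<lambda>k. E k *\<^sub>v 0\<^sub>v n) S = finsum_vec TYPE('a) n (\<lambda>_. 0\<^sub>v n) S"
    using S E by (intro finsum_vec_cong) (auto simp: mult_mat_vec_zero[OF E])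
  then show "0\<^sub>v n \<in> ?T"
    using S by (simp add: finsum_vec_zero)
  fix v w assume v: "v \<in> ?T" and w: "w \<in> ?T"
  have "finsum_vec TYPE('a) n (\<lambda>k. E k *\<^sub>v (v + w)) S = finsum_vec TYPE('a) n (\<lambda>k. E k *\<^sub>v v + E k *\<^sub>v w) S"
    using S v w by (intro finsum_vec_cong) (auto simp: mult_add_distrib_mat_vec[OF E] E_mult)
  also have "\<dots> = v + w"
    using S v w by (subst finsum_vec_add) (auto simp: E_mult)
  finally show "v + w \<in> ?T"
    using v w by simp
next
  fix c v assume v: "v \<in> ?T"
  have E_mult: "E k *\<^sub>v v \<in> carrier_vec n" if "k \<in> S" for k
    using E[OF that] v by simp
  have "finsum_vec TYPE('a) n (\<lambda>k. E k *\<^sub>v (c \<cdot>\<^sub>v v)) S = finsum_vec TYPE('a) n (\<lambda>k. c \<cdot>\<^sub>v (E k *\<^sub>v v)) S"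
    using S v by (intro finsum_vec_cong) (auto simp: mult_mat_vec[OF E] E_mult)
  also have "\<dots> = c \<cdot>\<^sub>v v"
    using S v by (subst finsum_vec_smult) (auto simp: E_mult)
  finally show "c \<cdot>\<^sub>v v \<in> ?T"
    using v by simp
qed auto

lemma subsp_sum_subset:
  assumes "subspace_of n T" and "finite S" and "\<And>j. j \<in> S \<Longrightarrow> W j \<subseteq> T"
  shows "subsp_sum n W S \<subseteq> (T :: 'a::field vec set)"
  using assms finsum_vec_in_subspace unfolding subsp_sum_def by blast

lemma subsp_sum_member:
  assumes "finite S" and "\<And>k. k \<in> S \<Longrightarrow> subspace_of n (W k)" and "j \<in> S" and "w \<in> W j"
  shows "w \<in> subsp_sum n W (S :: nat set)"
proof -
  let ?f = "\<lambda>k. if k = j then w else 0\<^sub>v n"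
  have "w \<in> carrier_vec n"
    using assms subspace_of_carrier by blast
  then have "w = finsum_vec TYPE('a) n ?f S"
    using assms by (simp add: finsum_vec_delta)
  moreover have "\<forall>k\<in>S. ?f k \<in> W k"
    using assms subspace_of_zero by auto
  ultimately show ?thesis
    unfolding subsp_sum_def by (intro CollectI exI[of _ ?f]) simp
qed

lemma subspace_of_subsp_sum:
  assumes S: "finite S" and W: "\<And>j. j \<in> S \<Longrightarrow> subspace_of n (W j)"
  shows "subspace_of n (subsp_sum n W S :: 'a::field vec set)"
  unfolding subspace_of_def
proof (intro conjI ballI allI)
  have carrier: "f j \<in> carrier_vec n" if "\<forall>j\<in>S. f j \<in> W j" "j \<in> S" for f j
    using that W subspace_of_carrier by blast
  show "subsp_sum n W S \<subseteq> carrier_vec n"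
    unfolding subsp_sum_def using carrier by (auto intro: finsum_vec_closed)
  have "finsum_vec TYPE('a) n (\<lambda>_. 0\<^sub>v n) S = 0\<^sub>v n"
    using S by (rule finsum_vec_zero)
  then show "0\<^sub>v n \<in> subsp_sum n W S"
    unfolding subsp_sum_def using W subspace_of_zero by (intro CollectI exI[of _ "\<lambda>_. 0\<^sub>v n"]) auto
next
  fix v w assume "v \<in> subsp_sum n W S" "w \<in> subsp_sum n W S"
  then obtain f g where f: "\<forall>j\<in>S. f j \<in> W j" "v = finsum_vec TYPE('a) n f S"
    and g: "\<forall>j\<in>S. g j \<in> W j" "w = finsum_vec TYPE('a) n g S"
    unfolding subsp_sum_def by auto
  have "v + w = finsum_vec TYPE('a) n (\<lambda>j. f j + g j) S"
    using f g W subspace_of_carrier by (subst finsum_vec_add[OF S]) blast+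
  moreover have "\<forall>j\<in>S. f j + g j \<in> W j"
    using f g W subspace_of_add by blast
  ultimately show "v + w \<in> subsp_sum n W S"
    unfolding subsp_sum_def by blast
next
  fix c v assume "v \<in> subsp_sum n W S"
  then obtain f where f: "\<forall>j\<in>S. f j \<in> W j" "v = finsum_vec TYPE('a) n f S"
    unfolding subsp_sum_def by auto
  have "c \<cdot>\<^sub>v v = finsum_vec TYPE('a) n (\<lambda>j. c \<cdot>\<^sub>v f j) S"
    using f W subspace_of_carrier by (subst finsum_vec_smult[OF S]) blast+
  moreover have "\<forall>j\<in>S. c \<cdot>\<^sub>v f j \<in> W j"
    using f W subspace_of_smult by blast
  ultimately show "c \<cdot>\<^sub>v v \<in> subsp_sum n W S"
    unfolding subsp_sum_def by blast
qed

lemma subsp_sum_empty: "subsp_sum n W {} = {0\<^sub>v n :: 'a::field vec}"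
  unfolding subsp_sum_def by (simp add: finsum_vec_empty)

lemma subsp_sum_cong: "(\<And>j. j \<in> S \<Longrightarrow> W j = W' j) \<Longrightarrow> subsp_sum n W S = subsp_sum n W' S"
  unfolding subsp_sum_def by auto

lemma subsp_sum_mono:
  assumes "S \<subseteq> S'" and "finite S'" and "\<And>j. j \<in> S' \<Longrightarrow> subspace_of n (W j)"
  shows "subsp_sum n W S \<subseteq> (subsp_sum n W S' :: 'a::field vec set)"
  using assms finite_subset
  by (intro subsp_sum_subset subspace_of_subsp_sum) (auto intro: subsp_sum_member)

lemma subspace_of_mult_vec_shift:
  assumes W: "subspace_of n W" and X: "X \<in> carrier_mat n n" and u: "u \<in> W"
    and shift: "X *\<^sub>v u - c \<cdot>\<^sub>v u \<in> W"
  shows "X *\<^sub>v u \<in> (W :: 'a::field vec set)"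
proof -
  have "u \<in> carrier_vec n"
    using W u subspace_of_carrier by blast
  then have "X *\<^sub>v u = (X *\<^sub>v u - c \<cdot>\<^sub>v u) + c \<cdot>\<^sub>v u"
    using X by (intro eq_vecI) auto
  also have "\<dots> \<in> W"
    using W u shift by (intro subspace_of_add subspace_of_smult)
  finally show ?thesis .
qed

lemma mult_mat_vec_subsp_sum:
  assumes M: "M \<in> carrier_mat n n" and T: "subspace_of n T" and S: "finite S"
    and W: "\<And>j. j \<in> S \<Longrightarrow> subspace_of n (W j)"
    and maps: "\<And>j w. j \<in> S \<Longrightarrow> w \<in> W j \<Longrightarrow> M *\<^sub>v w \<in> T"
    and v: "v \<in> subsp_sum n W S"
  shows "M *\<^sub>v v \<in> (T :: 'a::field vec set)"
proof -
  have "subsp_sum n W S \<subseteq> {v \<in> carrier_vec n. M *\<^sub>v v \<in> T}"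
    using W maps subspace_of_carrier
    by (intro subsp_sum_subset[OF subspace_of_mat_preimage[OF M T] S]) blast
  then show ?thesis
    using v by auto
qed

lemma eigenspace_sum_shift:
  assumes X: "X \<in> carrier_mat n n" and S: "finite S"
    and v: "v \<in> subsp_sum n (\<lambda>j. eigenspace n X (th j)) S"
  shows "X *\<^sub>v v - th j0 \<cdot>\<^sub>v v \<in> subsp_sum n (\<lambda>j. eigenspace n X (th j)) (S - {j0})"
proof -
  let ?M = "X - th j0 \<cdot>\<^sub>m 1\<^sub>m n"
  have M: "?M \<in> carrier_mat n n"
    using X by (simp add: minus_carrier_mat)
  have M_mult: "?M *\<^sub>v w = X *\<^sub>v w - th j0 \<cdot>\<^sub>v w" if "w \<in> carrier_vec n" for w
    using X that by (simp add: minus_mult_distrib_mat_vec smult_mat_mult_vec[OF one_carrier_mat])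
  have sub: "subspace_of n (eigenspace n X (th j))" for j
    using X by (rule subspace_of_eigenspace)
  have "?M *\<^sub>v v \<in> subsp_sum n (\<lambda>j. eigenspace n X (th j)) (S - {j0})"
  proof (rule mult_mat_vec_subsp_sum[OF M subspace_of_subsp_sum S _ _ v])
    fix j w assume j: "j \<in> S" and w: "w \<in> eigenspace n X (th j)"
    then have w_carrier: "w \<in> carrier_vec n" and "X *\<^sub>v w = th j \<cdot>\<^sub>v w"
      unfolding eigenspace_def by auto
    then have Mw: "?M *\<^sub>v w = (th j - th j0) \<cdot>\<^sub>v w"
      by (simp add: M_mult) (intro eq_vecI, auto simp: algebra_simps)
    show "?M *\<^sub>v w \<in> subsp_sum n (\<lambda>j. eigenspace n X (th j)) (S - {j0})"
    proof (cases "j = j0")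
      case True
      then have "?M *\<^sub>v w = 0\<^sub>v n"
        using Mw w_carrier by (intro eq_vecI) auto
      then show ?thesis
        using subspace_of_zero[OF subspace_of_subsp_sum[of "S - {j0}" n "\<lambda>j. eigenspace n X (th j)"]] S sub
        by simp
    next
      case False
      then show ?thesis
        unfolding Mw using S j sub subspace_of_smult[OF sub w]
        by (intro subsp_sum_member) auto
    qed
  qed (use S sub in auto)
  moreover have "subspace_of n (subsp_sum n (\<lambda>j. eigenspace n X (th j)) S)"
    using S sub by (intro subspace_of_subsp_sum)
  then have "v \<in> carrier_vec n"
    using v subspace_of_carrier by blast
  ultimately show ?thesis
    by (simp add: M_mult)
qed

section \<open>Primitive idempotents\<close>

lemma foldr_factors_carrier:
  "X \<in> carrier_mat n n \<Longrightarrow> foldr (\<lambda>j M. (a j \<cdot>\<^sub>m (X - th j \<cdot>\<^sub>m 1\<^sub>m n)) * M) js (1\<^sub>m n) \<in> carrier_mat n n"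
  by (induction js) (auto simp: minus_carrier_mat)

lemma foldr_factors_mult_eigenvector:
  assumes X: "X \<in> carrier_mat n n" and p: "p \<in> carrier_vec n" and eig: "X *\<^sub>v p = c \<cdot>\<^sub>v p"
  shows "foldr (\<lambda>j M. (a j \<cdot>\<^sub>m (X - th j \<cdot>\<^sub>m 1\<^sub>m n)) * M) js (1\<^sub>m n) *\<^sub>v p
    = (\<Prod>j\<leftarrow>js. a j * (c - th j)) \<cdot>\<^sub>v (p :: 'a::field vec)"
proof (induction js)
  case Nil
  then show ?case using p by simp
next
  case (Cons j js)
  let ?F = "foldr (\<lambda>j M. (a j \<cdot>\<^sub>m (X - th j \<cdot>\<^sub>m 1\<^sub>m n)) * M) js (1\<^sub>m n)"
  let ?b = "\<Prod>j\<leftarrow>js. a j * (c - th j)"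
  have shifted: "X - th j \<cdot>\<^sub>m 1\<^sub>m n \<in> carrier_mat n n"
    using X by (simp add: minus_carrier_mat)
  then have factor: "a j \<cdot>\<^sub>m (X - th j \<cdot>\<^sub>m 1\<^sub>m n) \<in> carrier_mat n n"
    by simp
  have "?F \<in> carrier_mat n n"
    using X by (rule foldr_factors_carrier)
  then have "foldr (\<lambda>j M. (a j \<cdot>\<^sub>m (X - th j \<cdot>\<^sub>m 1\<^sub>m n)) * M) (j # js) (1\<^sub>m n) *\<^sub>v p
      = (a j \<cdot>\<^sub>m (X - th j \<cdot>\<^sub>m 1\<^sub>m n)) *\<^sub>v (?b \<cdot>\<^sub>v p)"
    using factor p Cons.IH by simp
  also have "\<dots> = (a j * (c - th j) * ?b) \<cdot>\<^sub>v p"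
    using X p eig
    by (simp add: smult_mat_mult_vec[OF shifted] minus_mult_distrib_mat_vec[OF X]
        smult_mat_mult_vec[OF one_carrier_mat] mult_mat_vec[OF X])
      (intro eq_vecI, auto simp: algebra_simps)
  finally show ?case
    by simp
qed

lemma prim_idem_carrier: "X \<in> carrier_mat n n \<Longrightarrow> prim_idem n X th d i \<in> carrier_mat n n"
  unfolding prim_idem_def by (rule foldr_factors_carrier)

lemma prim_idem_mult_eigenvector:
  assumes X: "X \<in> carrier_mat n n" and inj: "inj_on th {0..d}" and i: "i \<le> d" and m: "m \<le> d"
    and p: "p \<in> carrier_vec n" and eig: "X *\<^sub>v p = th m \<cdot>\<^sub>v p"
  shows "prim_idem n X th d i *\<^sub>v p = (if i = m then p else 0\<^sub>v n :: 'a::field vec)"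
proof -
  let ?js = "filter (\<lambda>j. j \<noteq> i) [0..<Suc d]"
  have "prim_idem n X th d i *\<^sub>v p = (\<Prod>j\<leftarrow>?js. inverse (th i - th j) * (th m - th j)) \<cdot>\<^sub>v p"
    unfolding prim_idem_def using X p eig by (rule foldr_factors_mult_eigenvector)
  also have "(\<Prod>j\<leftarrow>?js. inverse (th i - th j) * (th m - th j)) = (if i = m then 1 else 0)"
  proof (cases "i = m")
    case True
    have "th i \<noteq> th j" if "j \<in> set ?js" for j
      using that i inj by (auto simp: inj_on_def simp del: upt_Suc)
    then have "\<forall>j\<in>set ?js. inverse (th i - th j) * (th m - th j) = 1"
      using True by simp
    moreover have "(\<Prod>j\<leftarrow>js. f j) = 1" if "\<forall>j\<in>set js. f j = 1" for js and f :: "nat \<Rightarrow> 'a"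
      using that by (induction js) auto
    ultimately show ?thesis
      using True by simp
  next
    case False
    then have "m \<in> set ?js"
      using m by (auto simp del: upt_Suc)
    then show ?thesis
      using False by (auto simp: prod_list_zero_iff)
  qed
  finally show ?thesis
    using p by (auto intro!: eq_vecI)
qed

lemma mult_mat_vec_finsum_columns:
  assumes P: "P \<in> carrier_mat n n" and u: "u \<in> carrier_vec n"
  shows "P *\<^sub>v u = finsum_vec TYPE('a::comm_ring_1) n (\<lambda>j. u $ j \<cdot>\<^sub>v (P *\<^sub>v unit_vec n j)) {0..<n}"
proof -
  have unit: "(P *\<^sub>v unit_vec n j) $ i = P $$ (i, j)" if "i < n" "j < n" for i j
    using P that by simp
  have "(P *\<^sub>v u) $ i = (\<Sum>j\<in>{0..<n}. (u $ j \<cdot>\<^sub>v (P *\<^sub>v unit_vec n j)) $ i)" if "i < n" for i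
    using P u that by (simp add: unit) (simp add: scalar_prod_def ac_simps)
  then show ?thesis
    using P u by (simp add: finsum_vec_eq_vec) (intro eq_vecI, auto)
qed

lemma similar_mat_wit_diagonal_eigenvector:
  assumes X: "X \<in> carrier_mat n n" and wit: "similar_mat_wit X D P Q" and D: "diagonal_mat D"
    and j: "j < n"
  shows "X *\<^sub>v (P *\<^sub>v unit_vec n j) = D $$ (j, j) \<cdot>\<^sub>v (P *\<^sub>v unit_vec n j :: 'a::field vec)"
proof -
  have dim: "dim_row X = n"
    using X by auto
  have P: "P \<in> carrier_mat n n" and Q: "Q \<in> carrier_mat n n" and D_carrier: "D \<in> carrier_mat n n"
    and QP: "Q * P = 1\<^sub>m n" and XD: "X = P * D * Q"
    using wit unfolding similar_mat_wit_def Let_def dim by auto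
  have "X *\<^sub>v (P *\<^sub>v unit_vec n j) = (P * D) *\<^sub>v (Q *\<^sub>v (P *\<^sub>v unit_vec n j))"
    unfolding XD using P Q D_carrier by (intro assoc_mult_mat_vec) auto
  also have "\<dots> = P *\<^sub>v (D *\<^sub>v (Q *\<^sub>v (P *\<^sub>v unit_vec n j)))"
    using P Q D_carrier by simp
  also have "Q *\<^sub>v (P *\<^sub>v unit_vec n j) = (Q * P) *\<^sub>v unit_vec n j"
    using P Q by simp
  also have "(Q * P) *\<^sub>v unit_vec n j = unit_vec n j"
    by (simp add: QP)
  also have "D *\<^sub>v unit_vec n j = D $$ (j, j) \<cdot>\<^sub>v unit_vec n j"
    using D D_carrier j unfolding diagonal_mat_def by (intro eq_vecI) auto
  also have "P *\<^sub>v (D $$ (j, j) \<cdot>\<^sub>v unit_vec n j) = D $$ (j, j) \<cdot>\<^sub>v (P *\<^sub>v unit_vec n j)"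
    using P by (simp add: mult_mat_vec)
  finally show ?thesis .
qed

lemma diagonalizable_eigenvectors_span:
  assumes X: "X \<in> carrier_mat n n" and "diagonalizable X" and T: "subspace_of n T"
    and eig: "\<And>p c. p \<in> carrier_vec n \<Longrightarrow> X *\<^sub>v p = c \<cdot>\<^sub>v p \<Longrightarrow> p \<in> T"
  shows "carrier_vec n \<subseteq> (T :: 'a::field vec set)"
proof
  fix v :: "'a vec" assume v: "v \<in> carrier_vec n"
  obtain D P Q where wit: "similar_mat_wit X D P Q" and D: "diagonal_mat D"
    using assms(2) unfolding diagonalizable_def similar_mat_def by auto
  have dim: "dim_row X = n"
    using X by auto
  have P: "P \<in> carrier_mat n n" and Q: "Q \<in> carrier_mat n n" and PQ: "P * Q = 1\<^sub>m n"
    using wit unfolding similar_mat_wit_def Let_def dim by auto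
  have "v = (P * Q) *\<^sub>v v"
    using v by (simp add: PQ)
  also have "\<dots> = P *\<^sub>v (Q *\<^sub>v v)"
    using P Q v by simp
  also have "\<dots> = finsum_vec TYPE('a) n (\<lambda>j. (Q *\<^sub>v v) $ j \<cdot>\<^sub>v (P *\<^sub>v unit_vec n j)) {0..<n}"
    using P Q v by (intro mult_mat_vec_finsum_columns) auto
  also have "\<dots> \<in> T"
  proof (rule finsum_vec_in_subspace[OF T])
    fix j assume "j \<in> {0..<n}"
    then have "P *\<^sub>v unit_vec n j \<in> T"
      using P similar_mat_wit_diagonal_eigenvector[OF X wit D] by (intro eig) auto
    then show "(Q *\<^sub>v v) $ j \<cdot>\<^sub>v (P *\<^sub>v unit_vec n j) \<in> T"
      by (rule subspace_of_smult[OF T])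
  qed simp
  finally show "v \<in> T" .
qed

lemma prim_idem_sum:
  assumes X: "X \<in> carrier_mat n n" and dg: "diagonalizable X" and ord: "is_prim_idem_ordering n X E d"
    and v: "v \<in> carrier_vec n"
  shows "finsum_vec TYPE('a::field) n (\<lambda>k. E k *\<^sub>v v) {0..d} = v"
proof -
  obtain th where inj: "inj_on th {0..d}" and spec: "{k. eigenvalue X k} = th ` {0..d}"
    and E: "\<And>i. i \<le> d \<Longrightarrow> E i = prim_idem n X th d i"
    using ord unfolding is_prim_idem_ordering_def by auto
  have E_carrier: "E k \<in> carrier_mat n n" if "k \<in> {0..d}" for k
    using that X by (simp add: E prim_idem_carrier)
  let ?T = "{v \<in> carrier_vec n. finsum_vec TYPE('a) n (\<lambda>k. E k *\<^sub>v v) {0..d} = v}"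
  have T: "subspace_of n ?T"
    using E_carrier by (intro subspace_of_mat_finsum_fixed) auto
  have "p \<in> ?T" if p: "p \<in> carrier_vec n" and eig: "X *\<^sub>v p = c \<cdot>\<^sub>v p" for p c
  proof (cases "p = 0\<^sub>v n")
    case True
    then show ?thesis using subspace_of_zero[OF T] by simp
  next
    case False
    then have "eigenvalue X c"
      using p eig X unfolding eigenvalue_def eigenvector_def by auto
    then have "c \<in> th ` {0..d}"
      using spec by blast
    then obtain m where m: "m \<le> d" "c = th m"
      by auto
    have "finsum_vec TYPE('a) n (\<lambda>k. E k *\<^sub>v p) {0..d}
        = finsum_vec TYPE('a) n (\<lambda>k. if k = m then p else 0\<^sub>v n) {0..d}"
      using X inj p eig m E_carrier
      by (intro finsum_vec_cong) (auto simp: E prim_idem_mult_eigenvector)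
    also have "\<dots> = p"
      using m p by (intro finsum_vec_delta) auto
    finally show ?thesis
      using p by simp
  qed
  then have "carrier_vec n \<subseteq> ?T"
    by (intro diagonalizable_eigenvectors_span[OF X dg T])
  then show ?thesis
    using v by auto
qed

section \<open>The split decomposition\<close>

lemma tridiagonal_mult_img:
  assumes F: "\<And>k. k \<le> d \<Longrightarrow> F k \<in> carrier_mat n n"
    and sum_F: "\<And>v. v \<in> carrier_vec n \<Longrightarrow> finsum_vec TYPE('a::field) n (\<lambda>k. F k *\<^sub>v v) {0..d} = v"
    and X: "X \<in> carrier_mat n n"
    and tri: "\<forall>i\<le>d. \<forall>j\<le>d. (i > Suc j \<or> j > Suc i) \<longrightarrow> F i * X * F j = 0\<^sub>m n n"
    and j: "j \<le> d" and w: "w \<in> img n (F j)"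
  shows "X *\<^sub>v w \<in> subsp_sum n (\<lambda>k. img n (F k)) ({0..d} \<inter> {j - 1..j + 1})"
proof -
  obtain x where x: "x \<in> carrier_vec n" "w = F j *\<^sub>v x"
    using w unfolding img_def by auto
  let ?y = "X *\<^sub>v w" and ?R = "{0..d} \<inter> {j - 1..j + 1}"
  have y: "?y \<in> carrier_vec n"
    using X F[OF j] x by simp
  have far: "F k *\<^sub>v ?y = 0\<^sub>v n" if "k \<in> {0..d} - ?R" for k
  proof -
    have k: "F k \<in> carrier_mat n n"
      using F that by simp
    have "(F k * X * F j) *\<^sub>v x = (F k * X) *\<^sub>v (F j *\<^sub>v x)"
      using k X F[OF j] x by (intro assoc_mult_mat_vec) auto
    then have "F k *\<^sub>v ?y = (F k * X * F j) *\<^sub>v x"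
      using k X F[OF j] x by simp
    also have "F k * X * F j = 0\<^sub>m n n"
      using tri that j by auto
    finally show ?thesis
      using x by (auto intro!: eq_vecI)
  qed
  have "?y = finsum_vec TYPE('a) n (\<lambda>k. F k *\<^sub>v ?y) {0..d}"
    using sum_F[OF y] by simp
  also have "\<dots> = finsum_vec TYPE('a) n (\<lambda>k. F k *\<^sub>v ?y) ?R"
    using F y far by (intro finsum_vec_mono_neutral) (auto intro: mult_mat_vec_carrier)
  finally show ?thesis
    unfolding subsp_sum_def img_def using y by blast
qed

locale tridiagonal_split =
  fixes n d :: nat and A As :: "'a::field mat" and E Es :: "nat \<Rightarrow> 'a mat" and th ths :: "nat \<Rightarrow> 'a"
  assumes system: "tridiagonal_system n A E As Es d"
    and img_E: "\<And>i. i \<le> d \<Longrightarrow> img n (E i) = eigenspace n A (th i)"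
    and img_Es: "\<And>i. i \<le> d \<Longrightarrow> img n (Es i) = eigenspace n As (ths i)"
begin

abbreviation U :: "nat \<Rightarrow> 'a vec set" where
  "U \<equiv> split_decomp n E Es d"

lemma A_carrier: "A \<in> carrier_mat n n" and As_carrier: "As \<in> carrier_mat n n"
  using system unfolding tridiagonal_system_def by auto

lemma E_carrier: "i \<le> d \<Longrightarrow> E i \<in> carrier_mat n n"
  using system prim_idem_carrier[OF A_carrier]
  unfolding tridiagonal_system_def is_prim_idem_ordering_def by metis

lemma Es_carrier: "i \<le> d \<Longrightarrow> Es i \<in> carrier_mat n n"
  using system prim_idem_carrier[OF As_carrier]
  unfolding tridiagonal_system_def is_prim_idem_ordering_def by metis

lemma sum_E: "v \<in> carrier_vec n \<Longrightarrow> finsum_vec TYPE('a) n (\<lambda>k. E k *\<^sub>v v) {0..d} = v"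
  using system A_carrier by (intro prim_idem_sum) (auto simp: tridiagonal_system_def)

lemma sum_Es: "v \<in> carrier_vec n \<Longrightarrow> finsum_vec TYPE('a) n (\<lambda>k. Es k *\<^sub>v v) {0..d} = v"
  using system As_carrier by (intro prim_idem_sum) (auto simp: tridiagonal_system_def)

lemma subspace_img_E: "i \<le> d \<Longrightarrow> subspace_of n (img n (E i))"
  using E_carrier by (rule subspace_of_img)

lemma subspace_img_Es: "i \<le> d \<Longrightarrow> subspace_of n (img n (Es i))"
  using Es_carrier by (rule subspace_of_img)

definition E_flag :: "nat \<Rightarrow> 'a vec set" where
  "E_flag i = subsp_sum n (\<lambda>j. img n (E j)) {i..d}"

definition Es_flag :: "nat \<Rightarrow> 'a vec set" where
  "Es_flag i = subsp_sum n (\<lambda>j. img n (Es j)) {0..i}"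

lemma U_eq: "U i = Es_flag i \<inter> E_flag i"
  unfolding split_decomp_def E_flag_def Es_flag_def ..

lemma subspace_E_flag: "subspace_of n (E_flag i)"
  unfolding E_flag_def by (intro subspace_of_subsp_sum subspace_img_E) auto

lemma subspace_Es_flag: "i \<le> d \<Longrightarrow> subspace_of n (Es_flag i)"
  unfolding Es_flag_def by (intro subspace_of_subsp_sum subspace_img_Es) auto

lemma subspace_U: "i \<le> d \<Longrightarrow> subspace_of n (U i)"
  unfolding U_eq by (intro subspace_of_Int subspace_E_flag subspace_Es_flag)

lemma E_flag_0: "E_flag 0 = carrier_vec n"
proof
  show "E_flag 0 \<subseteq> carrier_vec n"
    using subspace_E_flag by (rule subspace_of_carrier)
  show "carrier_vec n \<subseteq> E_flag 0"
  proof
    fix v :: "'a vec" assume v: "v \<in> carrier_vec n"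
    have "\<forall>k\<in>{0..d}. E k *\<^sub>v v \<in> img n (E k)"
      using v unfolding img_def by blast
    then show "v \<in> E_flag 0"
      unfolding E_flag_def subsp_sum_def using sum_E[OF v]
      by (intro CollectI exI[of _ "\<lambda>k. E k *\<^sub>v v"]) auto
  qed
qed

lemma E_flag_top: "E_flag (Suc d) = {0\<^sub>v n}"
  unfolding E_flag_def by (simp add: subsp_sum_empty)

lemma E_flag_antimono: "j \<le> i \<Longrightarrow> E_flag i \<subseteq> E_flag j"
  unfolding E_flag_def by (intro subsp_sum_mono subspace_img_E) auto

lemma Es_flag_mono: "i \<le> j \<Longrightarrow> j \<le> d \<Longrightarrow> Es_flag i \<subseteq> Es_flag j"
  unfolding Es_flag_def by (intro subsp_sum_mono subspace_img_Es) auto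

lemma A_E_flag: "u \<in> E_flag i \<Longrightarrow> A *\<^sub>v u - th i \<cdot>\<^sub>v u \<in> E_flag (Suc i)"
proof -
  have eig: "E_flag k = subsp_sum n (\<lambda>j. eigenspace n A (th j)) {k..d}" for k
    unfolding E_flag_def by (intro subsp_sum_cong) (simp add: img_E)
  have "{i..d} - {i} = {Suc i..d}"
    by auto
  then show "u \<in> E_flag i \<Longrightarrow> A *\<^sub>v u - th i \<cdot>\<^sub>v u \<in> E_flag (Suc i)"
    unfolding eig using eigenspace_sum_shift[OF A_carrier, of "{i..d}" u th i] by simp
qed

lemma As_Es_flag:
  "i \<le> d \<Longrightarrow> u \<in> Es_flag i \<Longrightarrow> As *\<^sub>v u - ths i \<cdot>\<^sub>v u \<in> (if i = 0 then {0\<^sub>v n} else Es_flag (i - 1))"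
proof -
  assume i: "i \<le> d" and u: "u \<in> Es_flag i"
  have eig: "Es_flag k = subsp_sum n (\<lambda>j. eigenspace n As (ths j)) {0..k}" if "k \<le> d" for k
    unfolding Es_flag_def using that by (intro subsp_sum_cong) (simp add: img_Es)
  have "{0..i} - {i} = (if i = 0 then {} else {0..i - 1})"
    by auto
  then show ?thesis
    using eigenspace_sum_shift[OF As_carrier, of "{0..i}" u ths i] u i eig[of i] eig[of "i - 1"]
    by (auto simp: subsp_sum_empty split: if_splits)
qed

lemma A_Es_flag: "i < d \<Longrightarrow> u \<in> Es_flag i \<Longrightarrow> A *\<^sub>v u \<in> Es_flag (Suc i)"
  unfolding Es_flag_def
proof (erule mult_mat_vec_subsp_sum[OF A_carrier subspace_of_subsp_sum, rotated -1])
  fix j w assume i: "i < d" and j: "j \<in> {0..i}" and w: "w \<in> img n (Es j)"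
  have "A *\<^sub>v w \<in> subsp_sum n (\<lambda>k. img n (Es k)) ({0..d} \<inter> {j - 1..j + 1})"
    using system Es_carrier sum_Es A_carrier i j w
    by (intro tridiagonal_mult_img) (auto simp: tridiagonal_system_def)
  also have "\<dots> \<subseteq> subsp_sum n (\<lambda>k. img n (Es k)) {0..Suc i}"
    using i j by (intro subsp_sum_mono subspace_img_Es) auto
  finally show "A *\<^sub>v w \<in> subsp_sum n (\<lambda>k. img n (Es k)) {0..Suc i}" .
qed (use subspace_img_Es in auto)

lemma As_E_flag: "0 < i \<Longrightarrow> i \<le> d \<Longrightarrow> u \<in> E_flag i \<Longrightarrow> As *\<^sub>v u \<in> E_flag (i - 1)"
  unfolding E_flag_def
proof (erule mult_mat_vec_subsp_sum[OF As_carrier subspace_of_subsp_sum, rotated -1])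
  fix j w assume i: "0 < i" and j: "j \<in> {i..d}" and w: "w \<in> img n (E j)"
  have "As *\<^sub>v w \<in> subsp_sum n (\<lambda>k. img n (E k)) ({0..d} \<inter> {j - 1..j + 1})"
    using system E_carrier sum_E As_carrier j w
    by (intro tridiagonal_mult_img) (auto simp: tridiagonal_system_def)
  also have "\<dots> \<subseteq> subsp_sum n (\<lambda>k. img n (E k)) {i - 1..d}"
    using i j by (intro subsp_sum_mono subspace_img_E) auto
  finally show "As *\<^sub>v w \<in> subsp_sum n (\<lambda>k. img n (E k)) {i - 1..d}" .
qed (use subspace_img_E in auto)

lemma A_raises_U:
  assumes i: "i \<le> d" and u: "u \<in> U i"
  shows "A *\<^sub>v u - th i \<cdot>\<^sub>v u \<in> (if i = d then {0\<^sub>v n} else U (Suc i))"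
proof (cases "i = d")
  case True
  then show ?thesis
    using A_E_flag u E_flag_top unfolding U_eq by auto
next
  case False
  then have i: "i < d"
    using i by simp
  have sub: "subspace_of n (Es_flag (Suc i))"
    using i by (intro subspace_Es_flag) simp
  have "A *\<^sub>v u \<in> Es_flag (Suc i)"
    using A_Es_flag[OF i] u unfolding U_eq by blast
  moreover have "u \<in> Es_flag (Suc i)"
    using Es_flag_mono[of i "Suc i"] i u unfolding U_eq by auto
  then have "th i \<cdot>\<^sub>v u \<in> Es_flag (Suc i)"
    by (rule subspace_of_smult[OF sub])
  ultimately have "A *\<^sub>v u - th i \<cdot>\<^sub>v u \<in> Es_flag (Suc i)"
    by (rule subspace_of_diff[OF sub])
  moreover have "A *\<^sub>v u - th i \<cdot>\<^sub>v u \<in> E_flag (Suc i)"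
    using A_E_flag u unfolding U_eq by auto
  ultimately show ?thesis
    using False unfolding U_eq by auto
qed

lemma As_lowers_U:
  assumes i: "i \<le> d" and u: "u \<in> U i"
  shows "As *\<^sub>v u - ths i \<cdot>\<^sub>v u \<in> (if i = 0 then {0\<^sub>v n} else U (i - 1))"
proof (cases "i = 0")
  case True
  then show ?thesis
    using As_Es_flag[OF i] u unfolding U_eq by auto
next
  case False
  have "As *\<^sub>v u \<in> E_flag (i - 1)"
    using As_E_flag[of i u] False i u unfolding U_eq by blast
  moreover have "u \<in> E_flag (i - 1)"
    using E_flag_antimono[of "i - 1" i] u unfolding U_eq by auto
  then have "ths i \<cdot>\<^sub>v u \<in> E_flag (i - 1)"
    by (rule subspace_of_smult[OF subspace_E_flag])
  ultimately have "As *\<^sub>v u - ths i \<cdot>\<^sub>v u \<in> E_flag (i - 1)"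
    by (rule subspace_of_diff[OF subspace_E_flag])
  moreover have "As *\<^sub>v u - ths i \<cdot>\<^sub>v u \<in> Es_flag (i - 1)"
    using As_Es_flag[OF i] u False unfolding U_eq by auto
  ultimately show ?thesis
    using False unfolding U_eq by auto
qed

lemma subspace_U_sum: "subspace_of n (subsp_sum n U {0..d})"
  by (intro subspace_of_subsp_sum subspace_U) auto

lemma U_subset_U_sum: "i \<le> d \<Longrightarrow> U i \<subseteq> subsp_sum n U {0..d}"
  using subspace_U by (auto intro: subsp_sum_member)

lemma A_U_sum:
  assumes i: "i \<le> d" and u: "u \<in> U i"
  shows "A *\<^sub>v u \<in> subsp_sum n U {0..d}"
proof (rule subspace_of_mult_vec_shift[OF subspace_U_sum A_carrier])
  show "u \<in> subsp_sum n U {0..d}"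
    using U_subset_U_sum[OF i] u by auto
  show "A *\<^sub>v u - th i \<cdot>\<^sub>v u \<in> subsp_sum n U {0..d}"
    using A_raises_U[OF i u] U_subset_U_sum[of "Suc i"] subspace_of_zero[OF subspace_U_sum] i
    by (cases "i = d") auto
qed

lemma As_U_sum:
  assumes i: "i \<le> d" and u: "u \<in> U i"
  shows "As *\<^sub>v u \<in> subsp_sum n U {0..d}"
proof (rule subspace_of_mult_vec_shift[OF subspace_U_sum As_carrier])
  show "u \<in> subsp_sum n U {0..d}"
    using U_subset_U_sum[OF i] u by auto
  have "i - 1 \<le> d"
    using i by simp
  then show "As *\<^sub>v u - ths i \<cdot>\<^sub>v u \<in> subsp_sum n U {0..d}"
    using As_lowers_U[OF i u] U_subset_U_sum[of "i - 1"] subspace_of_zero[OF subspace_U_sum]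
    by (cases "i = 0") auto
qed

lemma U_0_nontrivial: "\<exists>p\<in>U 0. p \<noteq> 0\<^sub>v n"
proof -
  obtain th' where inj: "inj_on th' {0..d}" and spec: "{k. eigenvalue As k} = th' ` {0..d}"
    and Es: "Es 0 = prim_idem n As th' d 0"
    using system unfolding tridiagonal_system_def is_prim_idem_ordering_def by auto
  have "eigenvalue As (th' 0)"
    using spec by auto
  then obtain p where p: "p \<in> carrier_vec n" "p \<noteq> 0\<^sub>v n" "As *\<^sub>v p = th' 0 \<cdot>\<^sub>v p"
    unfolding eigenvalue_def eigenvector_def using As_carrier by auto
  have "Es 0 *\<^sub>v p = p"
    using prim_idem_mult_eigenvector[OF As_carrier inj _ _ p(1,3)] Es by simp
  then have "p \<in> img n (Es 0)"
    using p(1) unfolding img_def by (metis (mono_tags, lifting) mem_Collect_eq)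
  then have "p \<in> U 0"
    unfolding U_eq E_flag_0 Es_flag_def using p(1) subspace_img_Es
    by (auto intro: subsp_sum_member)
  with p(2) show ?thesis
    by blast
qed

lemma split_decomp_spans: "subsp_sum n U {0..d} = carrier_vec n"
proof -
  have "invariant_under A (subsp_sum n U {0..d})"
    unfolding invariant_under_def
    using mult_mat_vec_subsp_sum[OF A_carrier subspace_U_sum, of "{0..d}" U] subspace_U A_U_sum by simp
  moreover have "invariant_under As (subsp_sum n U {0..d})"
    unfolding invariant_under_def
    using mult_mat_vec_subsp_sum[OF As_carrier subspace_U_sum, of "{0..d}" U] subspace_U As_U_sum by simp
  moreover have "subsp_sum n U {0..d} \<noteq> {0\<^sub>v n}"
    using U_0_nontrivial U_subset_U_sum[of 0] by auto
  ultimately show ?thesis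
    using system subspace_U_sum unfolding tridiagonal_system_def by blast
qed

lemma eq_mat_on_split_decompI:
  assumes M: "M \<in> carrier_mat n n" and N: "N \<in> carrier_mat n n"
    and agree: "\<And>i u. i \<le> d \<Longrightarrow> u \<in> U i \<Longrightarrow> M *\<^sub>v u = N *\<^sub>v u"
  shows "M = N"
proof (rule eq_mat_on_vecI[OF M N])
  have "subsp_sum n U {0..d} \<subseteq> {v \<in> carrier_vec n. M *\<^sub>v v = N *\<^sub>v v}"
    using agree subspace_of_carrier[OF subspace_U]
    by (intro subsp_sum_subset subspace_of_mat_agree[OF M N]) auto
  then show "M *\<^sub>v v = N *\<^sub>v v" if "v \<in> carrier_vec n" for v
    using that split_decomp_spans by auto
qed

end

locale split_grading = tridiagonal_split n d A As E Es th ths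
  for n d :: nat and A As :: "'a::field mat" and E Es :: "nat \<Rightarrow> 'a mat" and th ths :: "nat \<Rightarrow> 'a" +
  fixes q :: 'a and K :: "'a mat"
  assumes q_nonzero: "q \<noteq> 0"
    and th_eq: "\<And>i. th i = q powi (2 * int i - int d)"
    and ths_eq: "\<And>i. ths i = q powi (int d - 2 * int i)"
    and K_mat: "K \<in> carrier_mat n n"
    and K_U: "\<And>i u. i \<le> d \<Longrightarrow> u \<in> U i \<Longrightarrow> K *\<^sub>v u = ths i \<cdot>\<^sub>v u"
begin

lemma ths_pred: "0 < i \<Longrightarrow> ths (i - 1) = q^2 * ths i"
proof -
  assume "0 < i"
  then have "ths (i - 1) = q powi (2 + (int d - 2 * int i))"
    by (simp add: ths_eq algebra_simps of_nat_diff)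
  also have "\<dots> = q powi 2 * q powi (int d - 2 * int i)"
    using q_nonzero by (intro power_int_add) simp
  finally show ?thesis
    by (simp add: ths_eq)
qed

lemma ths_Suc: "ths (Suc i) = inverse (q^2) * ths i"
proof -
  have "ths (Suc i) = q powi (-2 + (int d - 2 * int i))"
    by (simp add: ths_eq algebra_simps)
  also have "\<dots> = q powi (-2) * q powi (int d - 2 * int i)"
    using q_nonzero by (intro power_int_add) simp
  finally show ?thesis
    by (simp add: ths_eq power_int_minus)
qed

lemma th_ths: "th i * ths i = 1"
  using q_nonzero by (simp add: th_eq ths_eq power_int_add[symmetric])

lemma U_carrier: "i \<le> d \<Longrightarrow> u \<in> U i \<Longrightarrow> u \<in> carrier_vec n"
  using subspace_of_carrier[OF subspace_U] by blast

lemma K_lowered: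
  "i \<le> d \<Longrightarrow> u \<in> U i \<Longrightarrow> K *\<^sub>v (As *\<^sub>v u - ths i \<cdot>\<^sub>v u) = (q^2 * ths i) \<cdot>\<^sub>v (As *\<^sub>v u - ths i \<cdot>\<^sub>v u)"
  using As_lowers_U[of i u] K_U[of "i - 1"] ths_pred[of i] K_mat
  by (cases "i = 0") (auto simp: mult_mat_vec_zero)

lemma K_raised:
  "i \<le> d \<Longrightarrow> u \<in> U i \<Longrightarrow> K *\<^sub>v (A *\<^sub>v u - th i \<cdot>\<^sub>v u) = (inverse (q^2) * ths i) \<cdot>\<^sub>v (A *\<^sub>v u - th i \<cdot>\<^sub>v u)"
  using A_raises_U[of i u] K_U[of "Suc i"] ths_Suc[of i] K_mat
  by (cases "i = d") (auto simp: mult_mat_vec_zero)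

lemma K_onto: "img n K = carrier_vec n"
proof
  show "img n K \<subseteq> carrier_vec n"
    using subspace_of_img[OF K_mat] by (rule subspace_of_carrier)
  have "U i \<subseteq> img n K" if i: "i \<le> d" for i
  proof
    fix u assume u: "u \<in> U i"
    have "ths i \<noteq> 0"
      using q_nonzero by (simp add: ths_eq)
    then have "K *\<^sub>v (inverse (ths i) \<cdot>\<^sub>v u) = u"
      using K_mat K_U[OF i u] U_carrier[OF i u] by (simp add: mult_mat_vec) (intro eq_vecI, auto)
    then show "u \<in> img n K"
      using U_carrier[OF i u] unfolding img_def by (metis (mono_tags, lifting) mem_Collect_eq smult_carrier_vec)
  qed
  then have "subsp_sum n U {0..d} \<subseteq> img n K"
    by (intro subsp_sum_subset[OF subspace_of_img[OF K_mat]]) auto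
  then show "carrier_vec n \<subseteq> img n K"
    by (simp add: split_decomp_spans)
qed

lemma K_L_commute: "K * (As - K) = q^2 \<cdot>\<^sub>m ((As - K) * K)"
proof (rule eq_mat_on_split_decompI)
  fix i u assume i: "i \<le> d" and u: "u \<in> U i"
  have L: "As - K \<in> carrier_mat n n"
    using K_mat by (simp add: minus_carrier_mat)
  have L_mult: "(As - K) *\<^sub>v v = As *\<^sub>v v - K *\<^sub>v v" if "v \<in> carrier_vec n" for v
    using As_carrier K_mat that by (rule minus_mult_distrib_mat_vec)
  have "(K * (As - K)) *\<^sub>v u = K *\<^sub>v (As *\<^sub>v u - ths i \<cdot>\<^sub>v u)"
    using K_mat L U_carrier[OF i u] by (simp add: L_mult K_U[OF i u])
  also have "\<dots> = q^2 \<cdot>\<^sub>v (ths i \<cdot>\<^sub>v (As *\<^sub>v u - ths i \<cdot>\<^sub>v u))"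
    using K_lowered[OF i u] As_carrier U_carrier[OF i u] by (auto intro!: eq_vecI)
  also have "\<dots> = (q^2 \<cdot>\<^sub>m ((As - K) * K)) *\<^sub>v u"
    using K_mat L As_carrier U_carrier[OF i u]
    by (simp add: smult_mat_mult_vec[of _ n n] L_mult K_U[OF i u] mult_mat_vec)
  finally show "(K * (As - K)) *\<^sub>v u = (q^2 \<cdot>\<^sub>m ((As - K) * K)) *\<^sub>v u" .
qed (use K_mat As_carrier in \<open>auto simp: minus_carrier_mat\<close>)

lemma K_A_commute: "q^2 \<cdot>\<^sub>m (K * A) = A * K + (q^2 - 1) \<cdot>\<^sub>m 1\<^sub>m n"
proof (rule eq_mat_on_split_decompI)
  fix i u assume i: "i \<le> d" and u: "u \<in> U i"
  have u_carrier: "u \<in> carrier_vec n"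
    using U_carrier[OF i u] .
  have "K *\<^sub>v (A *\<^sub>v u) = K *\<^sub>v (A *\<^sub>v u - th i \<cdot>\<^sub>v u) + th i \<cdot>\<^sub>v (K *\<^sub>v u)"
    using K_mat A_carrier u_carrier by (simp add: mult_minus_distrib_mat_vec mult_mat_vec) (intro eq_vecI, auto)
  also have "th i \<cdot>\<^sub>v (K *\<^sub>v u) = u"
    using u_carrier th_ths[of i] by (simp add: K_U[OF i u] smult_smult_assoc)
  finally have KA: "K *\<^sub>v (A *\<^sub>v u) = (inverse (q^2) * ths i) \<cdot>\<^sub>v (A *\<^sub>v u - th i \<cdot>\<^sub>v u) + u"
    by (simp add: K_raised[OF i u])
  have "(q^2 \<cdot>\<^sub>m (K * A)) *\<^sub>v u = q^2 \<cdot>\<^sub>v (K *\<^sub>v (A *\<^sub>v u))"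
    using K_mat A_carrier u_carrier by (simp add: smult_mat_mult_vec[of _ n n])
  also have "\<dots> = ths i \<cdot>\<^sub>v (A *\<^sub>v u) + (q^2 - 1) \<cdot>\<^sub>v u"
  proof -
    have "q^2 * inverse (q^2) = 1"
      using q_nonzero by simp
    then have "q^2 * (inverse (q^2) * ths i * (a - th i * b) + b) = ths i * a + (q^2 - 1) * b" for a b
      using th_ths[of i] by Groebner_Basis.algebra
    then show ?thesis
      unfolding KA using A_carrier u_carrier by (intro eq_vecI) auto
  qed
  also have "\<dots> = (A * K + (q^2 - 1) \<cdot>\<^sub>m 1\<^sub>m n) *\<^sub>v u"
    using K_mat A_carrier u_carrier K_U[OF i u]
    by (simp add: add_mult_distrib_mat_vec[of _ n n] smult_mat_mult_vec[of _ n n] mult_mat_vec)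
  finally show "(q^2 \<cdot>\<^sub>m (K * A)) *\<^sub>v u = (A * K + (q^2 - 1) \<cdot>\<^sub>m 1\<^sub>m n) *\<^sub>v u" .
qed (use K_mat A_carrier in auto)

lemma q_grading: "q_grading n q A K (As - K)"
  using A_carrier K_mat q_nonzero K_L_commute K_A_commute
  by unfold_locales (auto simp: minus_carrier_mat)

end

theorem lemma7p12:
  fixes n d :: nat and q t :: "'a::field"
    and A As K :: "'a mat" and E Es :: "nat \<Rightarrow> 'a mat"
  assumes "alg_closed TYPE('a)"
    and "n > 0"
    and "q \<noteq> 0" and "not_root_of_unity q"
    and "d \<ge> 1"
    and "tridiagonal_system n A E As Es d"
    and "q_serre n q A As"
    and "\<forall>i\<le>d. img n (E i) = eigenspace n A (q powi (2 * int i - int d))"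
    and "\<forall>i\<le>d. img n (Es i) = eigenspace n As (q powi (int d - 2 * int i))"
    and "K \<in> carrier_mat n n"
    and "\<forall>i\<le>d. \<forall>u\<in>split_decomp n E Es d i. K *\<^sub>v u = q powi (int d - 2 * int i) \<cdot>\<^sub>v u"
  shows "q_serre n q A (t \<cdot>\<^sub>m As + (1 - t) \<cdot>\<^sub>m K)"
proof -
  interpret split_grading n d A As E Es "\<lambda>i. q powi (2 * int i - int d)" "\<lambda>i. q powi (int d - 2 * int i)" q K
    using assms(3,6,8-11) by unfold_locales auto
  interpret q_grading n q A K "As - K"
    by (rule q_grading)
  have "q^4 \<noteq> 1"
    using assms(4) spec[of _ 4] unfolding not_root_of_unity_def by simp
  moreover have "K + (As - K) = As"
    using carrier_matD[OF As_carrier] carrier_matD[OF K_mat] by (intro eq_matI) auto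
  moreover have "t \<cdot>\<^sub>m As + (1 - t) \<cdot>\<^sub>m K = K + t \<cdot>\<^sub>m (As - K)"
    using carrier_matD[OF As_carrier] carrier_matD[OF K_mat] by (intro eq_matI) (auto simp: algebra_simps)
  ultimately show ?thesis
    using q_serre_K_plus_smult_L[OF _ _ K_onto, of t] assms(7) by simp
qed

end
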